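(* Let $n\ge1$ and let $c\in\mathfrak{S}_{n+1}$ be a Coxeter element. For every $k\in\{1,\ldots,n\}$, \[\#D_k(\boldsymbol\lambda(c))=\min\bigl(\#\{\ell\in\mathbf L_c\cup\{1\}:\ell\leqslant k\},\ \#\{r\in\mathbf R_c\cup\{n+1\}:r>k\}\bigr).\]
   Context: $s_i=(i,i+1)$; a Coxeter element of $\mathfrak{S}_{n+1}$ is a product of $s_1,\dots,s_n$, each exactly once. It is a long cycle $c=(c_1,\dots,c_m,c_{m+1},\dots,c_{n+1})$ with $c_1=1<c_2<\dots<c_m=n+1>c_{m+1}>\dots>c_{n+1}>1$; $\mathbf L_c=\{c_2,\dots,c_{m-1}\}$, $\mathbf R_c=\{c_{m+1},\dots,c_{n+1}\}$. With $\mathbf L=\mathbf L_c\cup\{1\}=\{\ell_1<\dots<\ell_p\}$ and $\mathbf R=\mathbf R_c\cup\{n+1\}$, $\boldsymbol\lambda(c)$ is the partition with parts $\#\{r\in\mathbf R:\ell_i<r\}$, $i=1,\dots,p$. For a partition $\lambda$ with Ferrers diagram $\mathrm{Fer}(\lambda)=\{(i,j):j\le\lambda_i\}$, $D_k(\lambda)=\{(i,j)\in\mathrm{Fer}(\lambda):\lambda_1+i-j=k\}$. *)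

theory Defs
  imports Main
begin

definition simple_transp :: "nat \<Rightarrow> nat \<Rightarrow> nat" where
  "simple_transp i x = (if x = i then Suc i else if x = Suc i then i else x)"

definition coxeter_elem :: "nat \<Rightarrow> (nat \<Rightarrow> nat) \<Rightarrow> bool" where
  "coxeter_elem n c \<longleftrightarrow>
     (\<exists>ws. distinct ws \<and> set ws = {1..n} \<and>
           c = foldr (\<lambda>i f. simple_transp i \<circ> f) ws id)"

text \<open>Writing c = (c_1, ..., c_{n+1}) with c_1 = 1 and c(c_i) = c_{i+1}, so c_i = c^(i-1)(1).
  m is the position of n+1, i.e. m - 1 is the least j with c^j(1) = n+1.\<close>
definition pos_top :: "nat \<Rightarrow> (nat \<Rightarrow> nat) \<Rightarrow> nat" where
  "pos_top n c = (LEAST j. (c ^^ j) 1 = n + 1)"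

definition Lc :: "nat \<Rightarrow> (nat \<Rightarrow> nat) \<Rightarrow> nat set" where
  "Lc n c = {(c ^^ j) 1 | j. 0 < j \<and> j < pos_top n c}"

definition Rc :: "nat \<Rightarrow> (nat \<Rightarrow> nat) \<Rightarrow> nat set" where
  "Rc n c = {(c ^^ j) 1 | j. pos_top n c < j \<and> j \<le> n}"

definition lambda_c :: "nat \<Rightarrow> (nat \<Rightarrow> nat) \<Rightarrow> nat list" where
  "lambda_c n c =
     map (\<lambda>l. card {r \<in> Rc n c \<union> {n + 1}. l < r}) (sorted_list_of_set (Lc n c \<union> {1}))"

definition Fer :: "nat list \<Rightarrow> (nat \<times> nat) set" where
  "Fer lam = {(i, j). 1 \<le> i \<and> i \<le> length lam \<and> 1 \<le> j \<and> j \<le> lam ! (i - 1)}"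

definition Dk :: "nat list \<Rightarrow> nat \<Rightarrow> (nat \<times> nat) set" where
  "Dk lam k = {(i, j) \<in> Fer lam. int (lam ! 0) + int i - int j = int k}"

end

theory Submission
  imports Defs
begin

(* A Coxeter element is an (n+1)-cycle: deleting the letter n from the word leaves an n-cycle
   c' on {1..n}, and putting s_n back splices n+1 into that cycle, so the orbit
   1, c 1, ..., c^n 1 enumerates {1..n+1}.  Hence L and R partition {1..n+1} with 1 in L.
   If l_i is the i-th smallest element of L, counting {1..l_i - 1} gives
   lambda_i + l_i = #R + i, so row i of lambda meets D_k iff l_i <= k and #R + i > k.
   With a = #{l <= k} this gives #D_k = a - (k - #R), and k = a + #{r <= k} turns it into
   min a #{r > k}. *)

abbreviation simple_transp_prod :: "nat list \<Rightarrow> nat \<Rightarrow> nat" where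
  "simple_transp_prod ws \<equiv> foldr (\<lambda>i f. simple_transp i \<circ> f) ws id"

lemma simple_transp_involution: "simple_transp i (simple_transp i x) = x"
  by (simp add: simple_transp_def)

lemma bij_simple_transp: "bij (simple_transp i)"
  by (metis bijI' simple_transp_involution)

lemma bij_simple_transp_prod: "bij (simple_transp_prod ws)"
proof (induction ws)
  case Nil
  then show ?case by (simp add: id_def[symmetric])
next
  case (Cons i ws)
  have "simple_transp_prod (i # ws) = simple_transp i \<circ> simple_transp_prod ws"
    by simp
  then show ?case using Cons bij_simple_transp bij_comp by metis
qed

lemma simple_transp_prod_append:
  "simple_transp_prod (as @ bs) = simple_transp_prod as \<circ> simple_transp_prod bs"
  by (induction as) auto

lemma simple_transp_prod_fixes:
  assumes "set ws \<subseteq> {1..N}" "x \<notin> {1..Suc N}"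
  shows "simple_transp_prod ws x = x"
  using assms by (induction ws) (auto simp: simple_transp_def)

lemma bij_betw_lessThan_iff_distinct_map:
  "bij_betw e {..<N} A \<longleftrightarrow> distinct (map e [0..<N]) \<and> set (map e [0..<N]) = A"
  by (auto simp: bij_betw_def distinct_map atLeast0LessThan)

lemma orbit_insert_point:
  fixes f g :: "'a \<Rightarrow> 'a"
  assumes orbit: "bij_betw (\<lambda>j. (f ^^ j) x) {..<M} A"
    and a: "a \<in> A" and b: "b \<notin> A"
    and ga: "g a = b" and gb: "g b = f a" and g: "\<And>y. y \<noteq> a \<Longrightarrow> y \<noteq> b \<Longrightarrow> g y = f y"
  shows "bij_betw (\<lambda>j. (g ^^ j) x) {..<Suc M} (insert b A)"
proof -
  obtain t where t: "t < M" "(f ^^ t) x = a"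
    using a orbit by (auto simp: bij_betw_def)
  have g_agrees: "g ((f ^^ i) x) = (f ^^ Suc i) x" if "i < M" "i \<noteq> t" for i
  proof -
    have "(f ^^ i) x \<noteq> a"
      using that t orbit by (auto simp: bij_betw_def inj_on_def)
    moreover have "(f ^^ i) x \<noteq> b"
      using that orbit b by (auto simp: bij_betw_def)
    ultimately show ?thesis by (simp add: g)
  qed
  have iter: "(g ^^ j) x = (if j \<le> t then (f ^^ j) x else if j = Suc t then b else (f ^^ (j - 1)) x)"
    if "j \<le> M" for j
    using that
  proof (induction j)
    case 0
    then show ?case by simp
  next
    case (Suc j)
    consider "j < t" | "j = t" | "j = Suc t" | "Suc t < j" by linarith
    then show ?case
    proof cases
      case 1
      then show ?thesis using Suc g_agrees[of j] t by simp
    next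
      case 2
      then show ?thesis using Suc t ga by simp
    next
      case 3
      then show ?thesis using Suc t gb by simp
    next
      case 4
      then show ?thesis using Suc g_agrees[of "j - 1"] by simp
    qed
  qed
  define xs where "xs = map (\<lambda>j. (f ^^ j) x) [0..<M]"
  have xs: "distinct xs" "set xs = A" "length xs = M"
    using orbit by (simp_all add: xs_def bij_betw_lessThan_iff_distinct_map)
  have orbit_g: "map (\<lambda>j. (g ^^ j) x) [0..<Suc M] = take (Suc t) xs @ b # drop (Suc t) xs"
  proof (rule nth_equalityI)
    fix i assume "i < length (map (\<lambda>j. (g ^^ j) x) [0..<Suc M])"
    then have i: "i \<le> M" by simp
    show "map (\<lambda>j. (g ^^ j) x) [0..<Suc M] ! i = (take (Suc t) xs @ b # drop (Suc t) xs) ! i"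
      using iter[OF i] i t xs(3)
      by (auto simp del: funpow.simps simp: nth_append nth_Cons' xs_def numeral_2_eq_2 Suc_diff_Suc)
  qed (use xs t in simp)
  moreover have "distinct (take (Suc t) xs @ b # drop (Suc t) xs)"
    using xs b by (auto simp: set_take_disj_set_drop_if_distinct dest: in_set_takeD in_set_dropD)
  moreover have "set (take (Suc t) xs @ b # drop (Suc t) xs) = insert b A"
    using xs(2) set_append[of "take (Suc t) xs" "drop (Suc t) xs"] by auto
  ultimately show ?thesis
    unfolding bij_betw_lessThan_iff_distinct_map orbit_g by blast
qed

lemma simple_transp_prod_orbit:
  assumes "distinct ws" "set ws = {1..N}"
  shows "bij_betw (\<lambda>j. (simple_transp_prod ws ^^ j) 1) {..<Suc N} {1..Suc N}"
  using assms
proof (induction N arbitrary: ws)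
  case 0
  then show ?case by (simp add: bij_betw_def lessThan_Suc)
next
  case (Suc N)
  obtain as bs where ws: "ws = as @ Suc N # bs"
    using Suc.prems(2) split_list[of "Suc N" ws] by auto
  have "set (as @ bs) = set ws - {Suc N}"
    using Suc.prems(1) ws by auto
  also have "\<dots> = {1..N}"
    using Suc.prems(2) by (simp add: atLeastAtMostSuc_conv)
  finally have as_bs: "distinct (as @ bs)" "set (as @ bs) = {1..N}"
    using Suc.prems(1) ws by simp_all
  define A B where "A = simple_transp_prod as" and "B = simple_transp_prod bs"
  let ?b = "Suc (Suc N)"
  have as_bs_range: "set as \<subseteq> {1..N}" "set bs \<subseteq> {1..N}"
    using as_bs(2) by auto
  have A_b: "A ?b = ?b"
    using as_bs_range(1) simple_transp_prod_fixes by (simp add: A_def)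
  have B_fix: "B x = x" if "x \<notin> {1..Suc N}" for x
    using as_bs_range(2) that simple_transp_prod_fixes by (simp add: B_def)
  have B_b: "B ?b = ?b"
    using B_fix by simp
  have "bij B"
    unfolding B_def by (rule bij_simple_transp_prod)
  then obtain a where Ba: "B a = Suc N"
    by (metis bij_pointE)
  have "inj B"
    using \<open>bij B\<close> by (rule bij_is_inj)
  have a: "a \<in> {1..Suc N}"
    using B_fix[of a] Ba by fastforce
  have "bij_betw (\<lambda>j. ((A \<circ> B) ^^ j) 1) {..<Suc N} {1..Suc N}"
    using Suc.IH[OF as_bs] unfolding A_def B_def simple_transp_prod_append .
  then have "bij_betw (\<lambda>j. ((A \<circ> simple_transp (Suc N) \<circ> B) ^^ j) 1) {..<Suc (Suc N)}
      (insert ?b {1..Suc N})"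
  proof (rule orbit_insert_point[OF _ a])
    show "(A \<circ> simple_transp (Suc N) \<circ> B) a = ?b"
      using Ba A_b by (simp add: simple_transp_def)
    show "(A \<circ> simple_transp (Suc N) \<circ> B) ?b = (A \<circ> B) a"
      using Ba B_b by (simp add: simple_transp_def)
    fix y assume "y \<noteq> a" "y \<noteq> ?b"
    then have "B y \<noteq> Suc N" "B y \<noteq> ?b"
      using \<open>inj B\<close> Ba B_b by (metis injD)+
    then show "(A \<circ> simple_transp (Suc N) \<circ> B) y = (A \<circ> B) y"
      by (simp add: simple_transp_def)
  qed simp
  moreover have "simple_transp_prod ws = A \<circ> simple_transp (Suc N) \<circ> B"
    unfolding ws A_def B_def simple_transp_prod_append by (simp add: comp_assoc)
  moreover have "{1..Suc (Suc N)} = insert ?b {1..Suc N}"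
    by auto
  ultimately show ?case
    by (simp only:)
qed

lemma card_Dk:
  "card (Dk lam k) = card {i. i < length lam \<and> k \<le> lam ! 0 + i \<and> lam ! 0 + Suc i \<le> lam ! i + k}"
  (is "_ = card ?I")
proof -
  have "Dk lam k = (\<lambda>i. (Suc i, lam ! 0 + Suc i - k)) ` ?I"
  proof (intro set_eqI iffI)
    fix p assume "p \<in> Dk lam k"
    then obtain i j where "p = (Suc i, j)" "i < length lam" "1 \<le> j" "j \<le> lam ! i"
      "int (lam ! 0) + int (Suc i) - int j = int k"
      unfolding Dk_def Fer_def by (auto simp: gr0_conv_Suc Suc_le_eq)
    then show "p \<in> (\<lambda>i. (Suc i, lam ! 0 + Suc i - k)) ` ?I"
      by (intro image_eqI[of _ _ i]) auto
  qed (auto simp: Dk_def Fer_def)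
  moreover have "inj_on (\<lambda>i. (Suc i, lam ! 0 + Suc i - k)) ?I"
    by (auto simp: inj_on_def)
  ultimately show ?thesis
    by (simp add: card_image)
qed

lemma card_less_sorted_list_of_set_nth:
  fixes A :: "'a::linorder set"
  assumes "finite A" "i < card A"
  shows "card {a \<in> A. a < sorted_list_of_set A ! i} = i"
proof -
  define xs where "xs = sorted_list_of_set A"
  have xs: "sorted_wrt (<) xs" "set xs = A" "distinct xs" "i < length xs"
    using assms by (simp_all add: xs_def strict_sorted_list_of_set)
  have "{a \<in> A. a < xs ! i} = set (take i xs)"
  proof (intro set_eqI iffI)
    fix a assume "a \<in> {a \<in> A. a < xs ! i}"
    then obtain j where "j < length xs" "a = xs ! j" "xs ! j < xs ! i"
      using xs(2) by (auto simp: in_set_conv_nth)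
    moreover have "j < i"
      using calculation xs(1,4) sorted_wrt_nth_less[OF xs(1), of i j]
      by (metis less_asym linorder_neqE_nat)
    ultimately show "a \<in> set (take i xs)"
      by (auto simp: in_set_conv_nth)
  next
    fix a assume "a \<in> set (take i xs)"
    then obtain j where "j < i" "a = xs ! j"
      using xs(4) by (auto simp: in_set_conv_nth)
    then show "a \<in> {a \<in> A. a < xs ! i}"
      using xs sorted_wrt_nth_less[OF xs(1), of j i] by auto
  qed
  then show ?thesis
    using xs(3,4) by (simp add: xs_def distinct_card)
qed

lemma sorted_list_of_set_nth_le_iff:
  fixes A :: "'a::linorder set"
  assumes "finite A" "i < card A"
  shows "sorted_list_of_set A ! i \<le> k \<longleftrightarrow> i < card {a \<in> A. a \<le> k}"
proof -
  let ?x = "sorted_list_of_set A ! i"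
  have x: "?x \<in> A"
    using assms by (metis length_sorted_list_of_set nth_mem set_sorted_list_of_set)
  have below: "card {a \<in> A. a < ?x} = i"
    using assms by (rule card_less_sorted_list_of_set_nth)
  show ?thesis
  proof
    assume "?x \<le> k"
    then have "insert ?x {a \<in> A. a < ?x} \<subseteq> {a \<in> A. a \<le> k}"
      using x by auto
    then have "card (insert ?x {a \<in> A. a < ?x}) \<le> card {a \<in> A. a \<le> k}"
      using assms(1) by (intro card_mono) auto
    then show "i < card {a \<in> A. a \<le> k}"
      using below assms(1) by simp
  next
    assume "i < card {a \<in> A. a \<le> k}"
    show "?x \<le> k"
    proof (rule ccontr)
      assume "\<not> ?x \<le> k"
      then have "card {a \<in> A. a \<le> k} \<le> card {a \<in> A. a < ?x}"
        using assms(1) by (intro card_mono) auto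
      then show False
        using below \<open>i < card {a \<in> A. a \<le> k}\<close> by simp
    qed
  qed
qed

lemma card_below_partition:
  fixes L R :: "nat set"
  assumes "L \<inter> R = {}" "L \<union> R = {1..N}" "x \<le> Suc N"
  shows "card {l \<in> L. l < x} + card {r \<in> R. r < x} = x - 1"
proof -
  have "{1..<x} = {y \<in> L \<union> R. y < x}"
    unfolding assms(2) using assms(3) by auto
  then have "{1..<x} = {l \<in> L. l < x} \<union> {r \<in> R. r < x}"
    by blast
  moreover have "finite L" "finite R"
    using assms(2) by (metis finite_Un finite_atLeastAtMost)+
  ultimately have "card {1..<x} = card {l \<in> L. l < x} + card {r \<in> R. r < x}"
    using assms(1) by (simp add: card_Un_disjoint disjoint_iff)
  then show ?thesis
    by simp
qed

lemma card_split_by_pred: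
  assumes "finite A"
  shows "card A = card {x \<in> A. P x} + card {x \<in> A. \<not> P x}"
  using card_Int_Diff[OF assms, of "Collect P"] by (simp add: Int_def set_diff_eq)

lemma card_Dk_partition:
  fixes L R :: "nat set"
  assumes disj: "L \<inter> R = {}" and un: "L \<union> R = {1..N}" and "1 \<in> L" and "k \<le> N"
  shows "card (Dk (map (\<lambda>l. card {r \<in> R. l < r}) (sorted_list_of_set L)) k) =
    min (card {l \<in> L. l \<le> k}) (card {r \<in> R. k < r})"
proof -
  define sl where "sl = sorted_list_of_set L"
  define lam where "lam = map (\<lambda>l. card {r \<in> R. l < r}) sl"
  define a where "a = card {l \<in> L. l \<le> k}"
  have fin: "finite L" "finite R"
    using un by (metis finite_Un finite_atLeastAtMost)+
  have len: "length lam = card L"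
    by (simp add: lam_def sl_def)
  have sl_in: "sl ! i \<in> L" if "i < card L" for i
    using that fin(1) by (metis length_sorted_list_of_set nth_mem set_sorted_list_of_set sl_def)
  have row: "lam ! i + sl ! i = card R + Suc i" if i: "i < card L" for i
  proof -
    let ?l = "sl ! i"
    have "?l \<notin> R" "?l \<le> N"
      using sl_in[OF i] disj un by auto
    have "card {x \<in> L. x < ?l} + card {r \<in> R. r < ?l} = ?l - 1"
      using disj un \<open>?l \<le> N\<close> by (intro card_below_partition) auto
    moreover have "card {x \<in> L. x < ?l} = i"
      using fin(1) i unfolding sl_def by (rule card_less_sorted_list_of_set_nth)
    moreover have "{r \<in> R. \<not> r < ?l} = {r \<in> R. ?l < r}"
      using \<open>?l \<notin> R\<close> by (auto simp: not_less order_le_less)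
    then have "card R = card {r \<in> R. r < ?l} + lam ! i"
      using card_split_by_pred[OF fin(2), of "\<lambda>r. r < ?l"] i by (simp add: lam_def sl_def)
    moreover have "1 \<le> ?l"
      using sl_in[OF i] un by auto
    ultimately show ?thesis
      by linarith
  qed
  have card_L: "0 < card L"
    using fin(1) \<open>1 \<in> L\<close> card_gt_0_iff by blast
  have "sl ! 0 = 1"
  proof -
    have "0 < card {l \<in> L. l \<le> 1}"
      using fin(1) \<open>1 \<in> L\<close> by (subst card_gt_0_iff) auto
    then have "sl ! 0 \<le> 1"
      using fin(1) card_L unfolding sl_def by (subst sorted_list_of_set_nth_le_iff)
    moreover have "1 \<le> sl ! 0"
      using sl_in[OF card_L] un by auto
    ultimately show ?thesis
      by simp
  qed
  then have lam0: "lam ! 0 = card R"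
    using row[OF card_L] by simp
  have "a \<le> card L"
    unfolding a_def using fin(1) by (intro card_mono) auto
  have "{i. i < length lam \<and> k \<le> lam ! 0 + i \<and> lam ! 0 + Suc i \<le> lam ! i + k} = {k - card R..<a}"
  proof -
    have "lam ! 0 + Suc i \<le> lam ! i + k \<longleftrightarrow> i < a" if "i < card L" for i
      using row[OF that] lam0 sorted_list_of_set_nth_le_iff[OF fin(1) that, of k]
      unfolding a_def sl_def by linarith
    then show ?thesis
      using \<open>a \<le> card L\<close> len lam0 by auto
  qed
  then have "card (Dk lam k) = a - (k - card R)"
    by (simp add: card_Dk)
  moreover have "k = a + card {r \<in> R. r \<le> k}"
    using card_below_partition[OF disj un, of "Suc k"] \<open>k \<le> N\<close>
    by (simp add: a_def less_Suc_eq_le)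
  moreover have "card R = card {r \<in> R. r \<le> k} + card {r \<in> R. k < r}"
    using card_split_by_pred[OF fin(2), of "\<lambda>r. r \<le> k"] by (simp add: not_le)
  ultimately show ?thesis
    unfolding lam_def sl_def a_def by linarith
qed

lemma orbit_Lc_Rc_partition:
  assumes orbit: "bij_betw (\<lambda>j. (c ^^ j) 1) {..n} {1..n + 1}" and "1 \<le> n"
  shows "(Lc n c \<union> {1}) \<inter> (Rc n c \<union> {n + 1}) = {}"
    and "(Lc n c \<union> {1}) \<union> (Rc n c \<union> {n + 1}) = {1..n + 1}"
proof -
  let ?e = "\<lambda>j. (c ^^ j) 1"
  have "n + 1 \<in> ?e ` {..n}"
    using orbit by (simp add: bij_betw_def)
  then obtain t where t: "t \<le> n" "?e t = n + 1"
    by auto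
  have inj: "inj_on ?e {..n}"
    using orbit by (rule bij_betw_imp_inj_on)
  have top: "pos_top n c = t"
    unfolding pos_top_def
  proof (rule Least_equality)
    show "?e t = n + 1" by (rule t(2))
    fix j assume ej: "?e j = n + 1"
    show "t \<le> j"
    proof (cases "j \<le> n")
      case True
      then show ?thesis
        using inj_onD[OF inj, of j t] ej t by simp
    qed (use t in simp)
  qed
  have "0 < t"
    using t \<open>1 \<le> n\<close> by (cases t) auto
  then have "{..<t} = insert 0 {0<..<t}"
    by auto
  moreover have "Lc n c = ?e ` {0<..<t}"
    unfolding Lc_def top by auto
  ultimately have L: "Lc n c \<union> {1} = ?e ` {..<t}"
    by auto
  have "{t..n} = insert t {t<..n}"
    using t(1) by auto
  moreover have "Rc n c = ?e ` {t<..n}"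
    unfolding Rc_def top by auto
  ultimately have R: "Rc n c \<union> {n + 1} = ?e ` {t..n}"
    using t(2) by auto
  have "?e ` {..<t} \<inter> ?e ` {t..n} = ?e ` ({..<t} \<inter> {t..n})"
    by (rule inj_on_image_Int[OF inj, symmetric]) (use t(1) in auto)
  then show "(Lc n c \<union> {1}) \<inter> (Rc n c \<union> {n + 1}) = {}"
    unfolding L R by auto
  have "{..<t} \<union> {t..n} = {..n}"
    using t(1) by auto
  then show "(Lc n c \<union> {1}) \<union> (Rc n c \<union> {n + 1}) = {1..n + 1}"
    unfolding L R image_Un[symmetric] using orbit by (simp add: bij_betw_def)
qed

theorem lemma3p13:
  fixes n k :: nat and c :: "nat \<Rightarrow> nat"
  assumes "n \<ge> 1" and "coxeter_elem n c" and "1 \<le> k" and "k \<le> n"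
  shows "card (Dk (lambda_c n c) k) =
           min (card {l \<in> Lc n c \<union> {1}. l \<le> k}) (card {r \<in> Rc n c \<union> {n + 1}. k < r})"
proof -
  obtain ws where "distinct ws" "set ws = {1..n}" "c = simple_transp_prod ws"
    using assms(2) unfolding coxeter_elem_def by blast
  then have orbit: "bij_betw (\<lambda>j. (c ^^ j) 1) {..n} {1..n + 1}"
    using simple_transp_prod_orbit by (simp add: lessThan_Suc_atMost)
  show ?thesis
    unfolding lambda_c_def
  proof (rule card_Dk_partition)
    show "(Lc n c \<union> {1}) \<inter> (Rc n c \<union> {n + 1}) = {}"
      and "(Lc n c \<union> {1}) \<union> (Rc n c \<union> {n + 1}) = {1..n + 1}"
      using orbit_Lc_Rc_partition[OF orbit assms(1)] by simp_all
  qed (use assms(4) in simp_all)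
qed

end
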